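(* Let $C$ be a convex curve in $\mathbb{R}^2$, and let $\alpha\colon I\to C$ be a differentiable curve moving in the counterclockwise direction about $C$. For each $t$, the line through $\alpha(t)$ and the center of curvature $x_\alpha(t)$ intersects $C$ at a unique point of $C\setminus\{\alpha(t)\}$, denoted $\beta(t)=h(\alpha(t))$. Then $\alpha$ and $\beta$ have matching orientations at time $t$ if and only if $x_\alpha(t)\in\mathrm{conv}(C)$.
   Context: $I=[0,1]$; $\mathrm{conv}(C)$ is the convex hull of $C$. For a differentiable curve $\alpha$: unit tangent $T=\alpha'/\|\alpha'\|$, inner unit normal $n(\alpha(t))=T'/\|T'\|$, curvature $\kappa(t)=\|T'(t)\|/\|\alpha'(t)\|$, center of curvature $x_\alpha(t)=\alpha(t)+\frac{1}{\kappa(t)}n(\alpha(t))$. The map $h\colon C\to C$ sends $p$ to the unique point of intersection of the normal line to $C$ at $p$ with $C\setminus\{p\}$. Curves $\alpha,\beta\colon I\to C$ have matching orientations at time $t$ if the bases $(\beta'(t),n(\beta(t)))$ and $(\alpha'(t),n(\alpha(t)))$ of $\mathbb{R}^2$ have determinants of the same sign. *)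

theory Defs
  imports "HOL-Analysis.Analysis"
begin

definition Iv :: "real set" where "Iv = {0..1}"

definition det2 :: "real^2 \<Rightarrow> real^2 \<Rightarrow> real" where
  "det2 u v = u$1 * v$2 - u$2 * v$1"

text \<open>A convex curve: the boundary of a compact convex set with nonempty interior
  (so that conv C is that set).\<close>
definition convex_curve :: "(real^2) set \<Rightarrow> bool" where
  "convex_curve C \<longleftrightarrow> (\<exists>K. compact K \<and> convex K \<and> interior K \<noteq> {} \<and> C = frontier K)"

definition is_inner_normal :: "(real^2) set \<Rightarrow> real^2 \<Rightarrow> real^2 \<Rightarrow> bool" where
  "is_inner_normal C p u \<longleftrightarrow> norm u = 1 \<and> (\<forall>x\<in>convex hull C. 0 \<le> (x - p) \<bullet> u)"

text \<open>A smooth (C^1) convex curve: a convex curve with a unique supporting line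
  (unique inner unit normal) at each of its points.\<close>
definition smooth_convex_curve :: "(real^2) set \<Rightarrow> bool" where
  "smooth_convex_curve C \<longleftrightarrow> convex_curve C \<and> (\<forall>p\<in>C. \<exists>!u. is_inner_normal C p u)"

definition inner_normal :: "(real^2) set \<Rightarrow> real^2 \<Rightarrow> real^2" where
  "inner_normal C p = (THE u. is_inner_normal C p u)"

definition hmap :: "(real^2) set \<Rightarrow> real^2 \<Rightarrow> real^2" where
  "hmap C p = (THE q. q \<in> C \<and> q \<noteq> p \<and> (\<exists>s::real. q = p + s *\<^sub>R inner_normal C p))"

definition dcurve :: "(real \<Rightarrow> real^2) \<Rightarrow> real \<Rightarrow> real^2" where
  "dcurve a t = vector_derivative a (at t within Iv)"

definition unit_tangent :: "(real \<Rightarrow> real^2) \<Rightarrow> real \<Rightarrow> real^2" where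
  "unit_tangent a t = (1 / norm (dcurve a t)) *\<^sub>R dcurve a t"

definition curve_normal :: "(real \<Rightarrow> real^2) \<Rightarrow> real \<Rightarrow> real^2" where
  "curve_normal a t = (1 / norm (dcurve (unit_tangent a) t)) *\<^sub>R dcurve (unit_tangent a) t"

definition curvature :: "(real \<Rightarrow> real^2) \<Rightarrow> real \<Rightarrow> real" where
  "curvature a t = norm (dcurve (unit_tangent a) t) / norm (dcurve a t)"

definition center_curv :: "(real \<Rightarrow> real^2) \<Rightarrow> real \<Rightarrow> real^2" where
  "center_curv a t = a t + (1 / curvature a t) *\<^sub>R curve_normal a t"

text \<open>Counterclockwise motion about C: the polar angle of a(t) around every interior
  point c of conv C is strictly increasing, i.e. det(a'(t), c - a(t)) > 0.\<close>
definition counterclockwise :: "(real^2) set \<Rightarrow> (real \<Rightarrow> real^2) \<Rightarrow> bool" where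
  "counterclockwise C a \<longleftrightarrow>
     (\<forall>s\<in>Iv. \<forall>c\<in>interior (convex hull C). det2 (dcurve a s) (c - a s) > 0)"

definition line_through :: "real^2 \<Rightarrow> real^2 \<Rightarrow> (real^2) set" where
  "line_through a b = {a + s *\<^sub>R (b - a) | s. True}"

definition matching_orient ::
  "(real^2) set \<Rightarrow> (real \<Rightarrow> real^2) \<Rightarrow> (real \<Rightarrow> real^2) \<Rightarrow> real \<Rightarrow> bool" where
  "matching_orient C a b t \<longleftrightarrow>
     sgn (det2 (dcurve b t) (inner_normal C (b t))) = sgn (det2 (dcurve a t) (curve_normal a t))"

end

theory Submission
  imports Defs
begin

text \<open>
  The inner normal \<open>N\<close> of \<open>C\<close> along \<open>\<alpha>\<close> is the quarter turn of the unit tangent \<open>T\<close>, and since the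
  inner normal of a convex curve turns monotonically, \<open>T' = |T'| N\<close>. So the curve normal
  \<open>n = T'/|T'|\<close> is \<open>N\<close>, the curvature is \<open>\<kappa> = |T'|/|\<alpha>'|\<close> and \<open>x\<^sub>\<alpha> = \<alpha> + N/\<kappa>\<close>.
  The normal line at \<open>\<alpha>(t)\<close> meets \<open>C\<close> exactly in \<open>\<alpha>(t)\<close> and \<open>\<beta>(t) = \<alpha>(t) + l N(t)\<close>, and the normal
  ray meets \<open>conv C\<close> in the parameters \<open>(0, l]\<close>, so \<open>x\<^sub>\<alpha>(t) \<in> conv C\<close> iff \<open>|\<alpha>'| \<le> l |T'|\<close>.
  Writing \<open>\<beta> = \<alpha> + \<mu> N\<close> and pairing with \<open>N(t)\<close> in a determinant eliminates \<open>\<mu>'\<close>: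
  \<open>det(\<beta>', N) = |\<alpha>'| - l |T'|\<close>. Finally \<open>\<beta>'\<close> is tangent to \<open>C\<close> at \<open>\<beta>(t)\<close> and the inner normals at
  the two ends of the chord point against each other, so \<open>det(\<beta>', n(\<beta>))\<close> and \<open>det(\<beta>', N)\<close> have
  opposite signs, while \<open>det(\<alpha>', N) > 0\<close> for a counterclockwise motion.
\<close>

section \<open>Vectors in the plane\<close>

lemma inner_vec2: "(x::real^2) \<bullet> y = x$1 * y$1 + x$2 * y$2"
  by (simp add: inner_vec_def sum_2)

lemma vec2_eq_iff: "(x::real^2) = y \<longleftrightarrow> x$1 = y$1 \<and> x$2 = y$2"
  by (simp add: vec_eq_iff forall_2)

definition rot90 :: "real^2 \<Rightarrow> real^2" where
  "rot90 v = (\<chi> i. if i = 1 then - v$2 else v$1)"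

lemma rot90_nth [simp]: "rot90 v $ 1 = - v$2" "rot90 v $ 2 = v$1"
  by (simp_all add: rot90_def)

lemma rot90_rot90 [simp]: "rot90 (rot90 v) = - v"
  by (simp add: vec2_eq_iff)

lemma rot90_scaleR [simp]: "rot90 (c *\<^sub>R v) = c *\<^sub>R rot90 v"
  by (simp add: vec2_eq_iff)

lemma rot90_minus [simp]: "rot90 (- v) = - rot90 v"
  by (simp add: vec2_eq_iff)

lemma inner_rot90_self [simp]: "rot90 v \<bullet> v = 0" "v \<bullet> rot90 v = 0"
  by (simp_all add: inner_vec2)

lemma inner_rot90_rot90 [simp]: "rot90 u \<bullet> rot90 v = u \<bullet> v"
  by (simp add: inner_vec2)

lemma norm_rot90 [simp]: "norm (rot90 v) = norm v"
  by (simp add: norm_eq_sqrt_inner)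

lemma bounded_linear_rot90: "bounded_linear rot90"
  by (intro linear_conv_bounded_linear[THEN iffD1] linearI) (simp_all add: vec2_eq_iff)

lemma det2_rot90_left [simp]: "det2 (rot90 x) y = - (x \<bullet> y)"
  by (simp add: det2_def inner_vec2)

lemma det2_rot90_right [simp]: "det2 x (rot90 y) = x \<bullet> y"
  by (simp add: det2_def inner_vec2)

lemma det2_self [simp]: "det2 x x = 0"
  by (simp add: det2_def)

lemma det2_add_left: "det2 (x + y) z = det2 x z + det2 y z"
  by (simp add: det2_def algebra_simps)

lemma det2_scaleR_left [simp]: "det2 (c *\<^sub>R x) z = c * det2 x z"
  by (simp add: det2_def algebra_simps)

lemma det2_minus_left [simp]: "det2 (- x) z = - det2 x z"
  by (simp add: det2_def)

lemma det2_mult_det2: "det2 v w * det2 v u = (v \<bullet> v) * (w \<bullet> u) - (v \<bullet> w) * (v \<bullet> u)"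
  unfolding det2_def inner_vec2 by algebra

lemma tendsto_det2 [tendsto_intros]:
  "(f \<longlongrightarrow> a) F \<Longrightarrow> (g \<longlongrightarrow> b) F \<Longrightarrow> ((\<lambda>x. det2 (f x) (g x)) \<longlongrightarrow> det2 a b) F"
  unfolding det2_def by (intro tendsto_intros)

lemma orthogonal_unit_eq_rot90:
  assumes "u \<bullet> u = 1" "v \<bullet> u = 0"
  shows "v = (- det2 v u) *\<^sub>R rot90 u"
proof -
  have "u$1 * u$1 + u$2 * u$2 = 1" "v$1 * u$1 + v$2 * u$2 = 0"
    using assms by (auto simp: inner_vec2)
  then show ?thesis
    unfolding vec2_eq_iff det2_def by simp algebra
qed

lemma orthogonal_rot90_eq:
  assumes "u \<bullet> u = 1" "v \<bullet> rot90 u = 0"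
  shows "v = (v \<bullet> u) *\<^sub>R u"
proof -
  have "v = (- det2 v (rot90 u)) *\<^sub>R rot90 (rot90 u)"
    using assms by (intro orthogonal_unit_eq_rot90) simp_all
  also have "\<dots> = (v \<bullet> u) *\<^sub>R u"
    by simp
  finally show ?thesis .
qed

lemma det2_sign_orthogonal:
  assumes "v \<noteq> 0" "v \<bullet> w = 0" "w \<bullet> u < 0"
  shows "det2 v w * det2 v u < 0"
  unfolding det2_mult_det2 using assms by (simp add: mult_pos_neg)

lemma line_through_scaleR:
  assumes "c \<noteq> 0"
  shows "line_through p (p + c *\<^sub>R v) = {p + r *\<^sub>R v | r. True}"
proof -
  have "p + s *\<^sub>R (p + c *\<^sub>R v - p) = p + (s * c) *\<^sub>R v" for s
    by simp
  then show ?thesis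
    unfolding line_through_def using assms by auto (metis divide_eq_eq)
qed

section \<open>Difference quotients\<close>

lemma has_vector_derivative_imp_tendsto_quotient:
  fixes f :: "real \<Rightarrow> 'a::real_normed_vector"
  assumes "(f has_vector_derivative D) (at x within S)"
  shows "((\<lambda>y. (1 / (y - x)) *\<^sub>R (f y - f x)) \<longlongrightarrow> D) (at x within S)"
proof -
  have "((\<lambda>y. (1 / norm (y - x)) *\<^sub>R (f y - (f x + (y - x) *\<^sub>R D))) \<longlongrightarrow> 0) (at x within S)"
    using assms unfolding has_vector_derivative_def has_derivative_within by blast
  then have "((\<lambda>y. norm ((1 / norm (y - x)) *\<^sub>R (f y - (f x + (y - x) *\<^sub>R D)))) \<longlongrightarrow> 0)
      (at x within S)"
    by (rule tendsto_norm_zero)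
  moreover have "norm ((1 / norm (y - x)) *\<^sub>R (f y - (f x + (y - x) *\<^sub>R D)))
      = norm ((1 / (y - x)) *\<^sub>R (f y - f x) - D)" if "y \<noteq> x" for y
  proof -
    have "(1 / (y - x)) *\<^sub>R (f y - f x) - D = (1 / (y - x)) *\<^sub>R (f y - (f x + (y - x) *\<^sub>R D))"
      using that by (simp add: scaleR_diff_right scaleR_add_right)
    then show ?thesis by simp
  qed
  ultimately have "((\<lambda>y. norm ((1 / (y - x)) *\<^sub>R (f y - f x) - D)) \<longlongrightarrow> 0) (at x within S)"
    by (elim Lim_transform_eventually) (auto simp: eventually_at_filter)
  then show ?thesis
    by (simp add: tendsto_norm_zero_iff LIM_zero_iff)
qed

lemma at_within_Iv_nontrivial: "t \<in> Iv \<Longrightarrow> at t within Iv \<noteq> bot"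
  by (simp add: Iv_def trivial_limit_within)

lemma has_vector_derivative_inner_nonpos:
  fixes f g :: "real \<Rightarrow> 'a::real_inner"
  assumes f: "(f has_vector_derivative f') (at t within S)"
    and g: "(g has_vector_derivative g') (at t within S)"
    and nontriv: "at t within S \<noteq> bot"
    and mono: "\<forall>s\<in>S. (f s - f t) \<bullet> (g s - g t) \<le> 0"
  shows "f' \<bullet> g' \<le> 0"
proof (rule tendsto_upperbound[OF _ _ nontriv])
  show "((\<lambda>s. ((1 / (s - t)) *\<^sub>R (f s - f t)) \<bullet> ((1 / (s - t)) *\<^sub>R (g s - g t))) \<longlongrightarrow> f' \<bullet> g')
      (at t within S)"
    by (intro tendsto_inner has_vector_derivative_imp_tendsto_quotient f g)
  show "\<forall>\<^sub>F s in at t within S. ((1 / (s - t)) *\<^sub>R (f s - f t)) \<bullet> ((1 / (s - t)) *\<^sub>R (g s - g t)) \<le> 0"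
    unfolding eventually_at_filter using mono by (intro always_eventually) (auto intro: divide_nonpos_nonneg)
qed

lemma has_vector_derivative_orthogonal_support:
  fixes f g :: "real \<Rightarrow> 'a::real_inner"
  assumes f: "(f has_vector_derivative D) (at t within S)"
    and g: "(g \<longlongrightarrow> g t) (at t within S)"
    and nontriv: "at t within S \<noteq> bot"
    and support: "\<forall>s\<in>S. 0 \<le> (f s - f t) \<bullet> g t \<and> 0 \<le> (f t - f s) \<bullet> g s"
  shows "D \<bullet> g t = 0"
proof -
  \<comment> \<open>The product of the quotient paired with \<open>g t\<close> and with \<open>g s\<close> is never positive and tends to
    \<open>(D \<bullet> g t)\<^sup>2\<close>; unlike a one-sided sign argument this also works at an end point of \<open>S\<close>.\<close>
  define q where "q s = (1 / (s - t)) *\<^sub>R (f s - f t)" for s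
  have "(D \<bullet> g t) * (D \<bullet> g t) \<le> 0"
  proof (rule tendsto_upperbound[OF _ _ nontriv])
    show "((\<lambda>s. (q s \<bullet> g t) * (q s \<bullet> g s)) \<longlongrightarrow> (D \<bullet> g t) * (D \<bullet> g t)) (at t within S)"
      unfolding q_def by (intro tendsto_intros has_vector_derivative_imp_tendsto_quotient f g)
    have "(q s \<bullet> g t) * (q s \<bullet> g s)
        = - ((1 / (s - t)) * (1 / (s - t))) * (((f s - f t) \<bullet> g t) * ((f t - f s) \<bullet> g s))" for s
      unfolding q_def by (simp add: algebra_simps)
    then show "\<forall>\<^sub>F s in at t within S. (q s \<bullet> g t) * (q s \<bullet> g s) \<le> 0"
      unfolding eventually_at_filter using support by (intro always_eventually) simp
  qed
  then show ?thesis
    by (auto simp: mult_le_0_iff)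
qed

lemma inner_diff_add_self: "(x - y) \<bullet> (x + y) = x \<bullet> x - y \<bullet> (y::'a::real_inner)"
  by (simp add: inner_add_right inner_diff_right inner_commute)

lemma has_vector_derivative_unit_orthogonal:
  fixes f :: "real \<Rightarrow> 'a::real_inner"
  assumes f: "(f has_vector_derivative D) (at t within S)"
    and nontriv: "at t within S \<noteq> bot" and "t \<in> S"
    and unit: "\<forall>s\<in>S. f s \<bullet> f s = 1"
  shows "D \<bullet> f t = 0"
proof -
  have "(f \<longlongrightarrow> f t) (at t within S)"
    using has_vector_derivative_continuous[OF f] by (simp add: continuous_within)
  then have "((\<lambda>s. ((1 / (s - t)) *\<^sub>R (f s - f t)) \<bullet> (f s + f t)) \<longlongrightarrow> D \<bullet> (f t + f t))
      (at t within S)"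
    by (intro tendsto_intros has_vector_derivative_imp_tendsto_quotient f)
  moreover have "\<forall>\<^sub>F s in at t within S. ((1 / (s - t)) *\<^sub>R (f s - f t)) \<bullet> (f s + f t) = 0"
    unfolding eventually_at_filter using unit \<open>t \<in> S\<close>
    by (intro always_eventually) (simp add: inner_diff_add_self)
  ultimately have "((\<lambda>s. 0) \<longlongrightarrow> D \<bullet> (f t + f t)) (at t within S)"
    by (rule Lim_transform_eventually)
  then have "0 = D \<bullet> (f t + f t)"
    by (rule tendsto_unique[OF nontriv tendsto_const])
  then show ?thesis
    by (simp add: inner_add_right)
qed

lemma det2_derivative_along_normal:
  fixes a b n :: "real \<Rightarrow> real^2" and \<mu> :: "real \<Rightarrow> real"
  assumes b: "\<forall>s\<in>S. b s = a s + \<mu> s *\<^sub>R n s" and "t \<in> S" and nontriv: "at t within S \<noteq> bot"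
    and a': "(a has_vector_derivative a') (at t within S)"
    and n': "(n has_vector_derivative n') (at t within S)"
    and b': "(b has_vector_derivative b') (at t within S)"
    and \<mu>: "(\<mu> \<longlongrightarrow> \<mu> t) (at t within S)"
  shows "det2 b' (n t) = det2 a' (n t) + \<mu> t * det2 n' (n t)"
proof -
  \<comment> \<open>No derivative of \<open>\<mu>\<close> is needed: the term \<open>(\<mu> s - \<mu> t) n t\<close> is annihilated by \<open>det2 _ (n t)\<close>.\<close>
  define q where "q f s = (1 / (s - t)) *\<^sub>R (f s - f t)" for f :: "real \<Rightarrow> real^2" and s
  have "((\<lambda>s. det2 (q a s) (n t) + \<mu> s * det2 (q n s) (n t)) \<longlongrightarrow> det2 a' (n t) + \<mu> t * det2 n' (n t))
      (at t within S)"
    unfolding q_def by (intro tendsto_intros has_vector_derivative_imp_tendsto_quotient a' n' \<mu>)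
  moreover have "det2 (q b s) (n t) = det2 (q a s) (n t) + \<mu> s * det2 (q n s) (n t)" if "s \<in> S" for s
  proof -
    have "b s - b t = (a s - a t) + \<mu> s *\<^sub>R (n s - n t) + (\<mu> s - \<mu> t) *\<^sub>R n t"
      using b that \<open>t \<in> S\<close> by (simp add: algebra_simps)
    then have "det2 (b s - b t) (n t) = det2 (a s - a t) (n t) + \<mu> s * det2 (n s - n t) (n t)"
      by (simp add: det2_add_left)
    then show ?thesis
      unfolding q_def det2_scaleR_left by (simp add: algebra_simps)
  qed
  ultimately have "((\<lambda>s. det2 (q b s) (n t)) \<longlongrightarrow> det2 a' (n t) + \<mu> t * det2 n' (n t)) (at t within S)"
    by (elim Lim_transform_eventually) (auto simp: eventually_at_filter intro!: always_eventually)
  moreover have "((\<lambda>s. det2 (q b s) (n t)) \<longlongrightarrow> det2 b' (n t)) (at t within S)"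
    unfolding q_def by (intro tendsto_intros has_vector_derivative_imp_tendsto_quotient b')
  ultimately show ?thesis
    using tendsto_unique[OF nontriv] by blast
qed

section \<open>Lines through a convex body\<close>

lemma in_open_segment_line:
  fixes v :: "'a::real_vector"
  assumes "v \<noteq> 0" "r \<in> open_segment a b"
  shows "p + r *\<^sub>R v \<in> open_segment (p + a *\<^sub>R v) (p + b *\<^sub>R v)"
proof -
  have "linear (\<lambda>r. r *\<^sub>R v)" "inj (\<lambda>r. r *\<^sub>R v)"
    using assms(1) by (auto simp: linear_scaleR_left inj_on_def)
  then have "r *\<^sub>R v \<in> open_segment (a *\<^sub>R v) (b *\<^sub>R v)"
    using open_segment_linear_image[of "\<lambda>r. r *\<^sub>R v" a b] assms(2) by auto
  then show ?thesis
    by simp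
qed

lemma convex_body_side_of_hyperplane:
  fixes K :: "'a::euclidean_space set"
  assumes K: "convex K" "closed K" "interior K \<noteq> {}"
    and miss: "\<And>x. x \<in> interior K \<Longrightarrow> (x - p) \<bullet> v \<noteq> 0"
  obtains w where "w = v \<or> w = - v" "\<And>x. x \<in> K \<Longrightarrow> 0 \<le> (x - p) \<bullet> w"
proof -
  obtain c where c: "c \<in> interior K"
    using K(3) by blast
  define w where "w = (if 0 < (c - p) \<bullet> v then v else - v)"
  have "0 < (c - p) \<bullet> w"
    using miss[OF c] by (auto simp: w_def)
  have pos: "0 < (x - p) \<bullet> w" if x: "x \<in> interior K" for x
  proof (rule ccontr)
    assume "\<not> 0 < (x - p) \<bullet> w"
    then have "w \<bullet> x \<le> w \<bullet> p" "w \<bullet> p \<le> w \<bullet> c"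
      using \<open>0 < (c - p) \<bullet> w\<close> by (auto simp: inner_diff_left inner_diff_right inner_commute[of _ w])
    then obtain z where "z \<in> interior K" "w \<bullet> z = w \<bullet> p"
      using connected_ivt_hyperplane[OF convex_connected[OF convex_interior[OF K(1)]] x c] by blast
    then show False
      using miss[of z] by (auto simp: w_def inner_diff_left inner_diff_right inner_commute[of _ v] split: if_splits)
  qed
  have "closure (interior K) \<subseteq> {x. 0 \<le> (x - p) \<bullet> w}"
    using pos by (intro closure_minimal closed_Collect_le continuous_intros) (auto intro: less_imp_le)
  moreover have "closure (interior K) = K"
    using convex_closure_interior[OF K(1,3)] closure_closed[OF K(2)] by simp
  ultimately show ?thesis
    by (intro that[of w]) (auto simp: w_def)
qed

lemma compact_line_preimage:
  fixes K :: "'a::real_normed_vector set"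
  assumes K: "compact K" and "u \<noteq> 0"
  shows "compact {r. p + r *\<^sub>R u \<in> K}"
  unfolding compact_eq_bounded_closed
proof
  obtain B where B: "\<And>x. x \<in> K \<Longrightarrow> norm x \<le> B"
    using compact_imp_bounded[OF K] unfolding bounded_iff by blast
  have "\<bar>r\<bar> \<le> (B + norm p) / norm u" if "p + r *\<^sub>R u \<in> K" for r
  proof -
    have "\<bar>r\<bar> * norm u = norm ((p + r *\<^sub>R u) - p)"
      by simp
    also have "\<dots> \<le> B + norm p"
      using B[OF that] norm_triangle_ineq4[of "p + r *\<^sub>R u" p] by linarith
    finally show ?thesis
      using \<open>u \<noteq> 0\<close> by (simp add: field_simps)
  qed
  then show "bounded {r. p + r *\<^sub>R u \<in> K}"
    by (auto simp: bounded_iff)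
  show "closed {r. p + r *\<^sub>R u \<in> K}"
    using compact_imp_closed[OF K]
    by (intro continuous_closed_vimage[unfolded vimage_def]) (auto intro!: continuous_intros)
qed

lemma in_interior_convex_line:
  fixes K :: "'a::euclidean_space set"
  assumes K: "convex K" "closed K" and "u \<noteq> 0" and "p \<in> K" "p + l *\<^sub>R u \<in> K"
    and r0: "p + r0 *\<^sub>R u \<in> interior K" and r: "0 < r" "r < l"
  shows "p + r *\<^sub>R u \<in> interior K"
proof (cases "r = r0")
  case False
  define b where "b = (if r < r0 then 0 else l)"
  have "r \<in> open_segment r0 b"
    using r False by (auto simp: b_def open_segment_eq_real_ivl)
  then have "p + r *\<^sub>R u \<in> open_segment (p + r0 *\<^sub>R u) (p + b *\<^sub>R u)"
    by (rule in_open_segment_line[OF \<open>u \<noteq> 0\<close>])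
  moreover have "p + b *\<^sub>R u \<in> closure K"
    using assms closure_closed[OF K(2)] by (simp add: b_def)
  ultimately show ?thesis
    using in_interior_closure_convex_segment[OF K(1) r0] by blast
qed (use r0 in simp)

lemma line_max_not_interior:
  fixes K :: "'a::real_normed_vector set"
  assumes "u \<noteq> 0" and max: "\<And>r. p + r *\<^sub>R u \<in> K \<Longrightarrow> r \<le> l"
  shows "p + l *\<^sub>R u \<notin> interior K"
proof
  assume "p + l *\<^sub>R u \<in> interior K"
  then obtain e where "0 < e" "ball (p + l *\<^sub>R u) e \<subseteq> K"
    by (meson mem_interior)
  moreover have "p + (l + e / (2 * norm u)) *\<^sub>R u \<in> ball (p + l *\<^sub>R u) e"
    using \<open>0 < e\<close> \<open>u \<noteq> 0\<close> by (simp add: dist_norm algebra_simps)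
  ultimately have "l + e / (2 * norm u) \<le> l"
    using max by blast
  moreover have "0 < e / (2 * norm u)"
    using \<open>0 < e\<close> \<open>u \<noteq> 0\<close> by simp
  ultimately show False
    by linarith
qed

section \<open>Inner normals of a smooth convex curve\<close>

lemma convex_curve_iff:
  "convex_curve C \<longleftrightarrow>
     compact (convex hull C) \<and> interior (convex hull C) \<noteq> {} \<and> frontier (convex hull C) = C"
proof
  assume "convex_curve C"
  then obtain K where K: "compact K" "convex K" "interior K \<noteq> {}" "C = frontier K"
    unfolding convex_curve_def by blast
  then have "convex hull C = K"
    using Krein_Milman_frontier[OF K(2,1)] by simp
  then show "compact (convex hull C) \<and> interior (convex hull C) \<noteq> {} \<and> frontier (convex hull C) = C"
    using K by simp
next
  assume "compact (convex hull C) \<and> interior (convex hull C) \<noteq> {} \<and> frontier (convex hull C) = C"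
  then show "convex_curve C"
    unfolding convex_curve_def by (metis convex_convex_hull)
qed

lemma is_inner_normal_interior_pos:
  assumes "is_inner_normal C p u" "c \<in> interior (convex hull C)"
  shows "0 < (c - p) \<bullet> u"
proof -
  obtain e where e: "e > 0" "ball c e \<subseteq> convex hull C"
    using assms(2) by (meson mem_interior)
  have u: "norm u = 1" "u \<bullet> u = 1"
    using assms(1) by (auto simp: is_inner_normal_def norm_eq_1)
  then have "c - (e/2) *\<^sub>R u \<in> ball c e"
    using e by (simp add: dist_norm)
  then have "c - (e/2) *\<^sub>R u \<in> convex hull C"
    using e by blast
  then have "0 \<le> (c - (e/2) *\<^sub>R u - p) \<bullet> u"
    using assms(1) by (simp add: is_inner_normal_def)
  also have "\<dots> = (c - p) \<bullet> u - e/2"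
    using u by (simp add: algebra_simps)
  finally show ?thesis
    using e by simp
qed

lemma hmap_eqI:
  assumes "inner_normal C p \<noteq> 0" "l \<noteq> 0"
    and chord: "\<forall>r. p + r *\<^sub>R inner_normal C p \<in> C \<longleftrightarrow> r = 0 \<or> r = l"
  shows "hmap C p = p + l *\<^sub>R inner_normal C p"
  unfolding hmap_def
proof (rule the_equality)
  show "p + l *\<^sub>R inner_normal C p \<in> C \<and> p + l *\<^sub>R inner_normal C p \<noteq> p
      \<and> (\<exists>s. p + l *\<^sub>R inner_normal C p = p + s *\<^sub>R inner_normal C p)"
    using assms by auto
  show "q = p + l *\<^sub>R inner_normal C p"
    if "q \<in> C \<and> q \<noteq> p \<and> (\<exists>s. q = p + s *\<^sub>R inner_normal C p)" for q
    using that chord by auto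
qed

context
  fixes C :: "(real^2) set"
  assumes C: "smooth_convex_curve C"
begin

lemma smooth_convex_curve_compact_hull: "compact (convex hull C)"
  and smooth_convex_curve_interior_hull: "interior (convex hull C) \<noteq> {}"
  and smooth_convex_curve_frontier_hull: "frontier (convex hull C) = C"
  using C unfolding smooth_convex_curve_def convex_curve_iff by blast+

lemma ex1_inner_normal: "p \<in> C \<Longrightarrow> \<exists>!u. is_inner_normal C p u"
  using C by (simp add: smooth_convex_curve_def)

lemma is_inner_normal_inner_normal: "p \<in> C \<Longrightarrow> is_inner_normal C p (inner_normal C p)"
  unfolding inner_normal_def by (rule theI'[OF ex1_inner_normal])

lemma inner_normal_unique: "p \<in> C \<Longrightarrow> is_inner_normal C p u \<Longrightarrow> inner_normal C p = u"
  unfolding inner_normal_def by (rule the1_equality[OF ex1_inner_normal])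

lemma norm_inner_normal: "p \<in> C \<Longrightarrow> norm (inner_normal C p) = 1"
  using is_inner_normal_inner_normal by (simp add: is_inner_normal_def)

lemma inner_normal_inner_self: "p \<in> C \<Longrightarrow> inner_normal C p \<bullet> inner_normal C p = 1"
  using norm_inner_normal by (simp add: norm_eq_1)

lemma inner_normal_supporting: "p \<in> C \<Longrightarrow> x \<in> convex hull C \<Longrightarrow> 0 \<le> (x - p) \<bullet> inner_normal C p"
  using is_inner_normal_inner_normal by (simp add: is_inner_normal_def)

lemma inner_normal_supporting_curve: "p \<in> C \<Longrightarrow> q \<in> C \<Longrightarrow> 0 \<le> (q - p) \<bullet> inner_normal C p"
  using inner_normal_supporting[of p q] hull_subset[of C convex] by blast

lemma continuous_on_inner_normal: "continuous_on C (inner_normal C)"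
proof -
  let ?G = "{z::(real^2) \<times> (real^2). \<forall>x\<in>convex hull C. 0 \<le> (x - fst z) \<bullet> snd z}"
  have "closed {z::(real^2) \<times> (real^2). 0 \<le> (x - fst z) \<bullet> snd z}" for x
    by (intro closed_Collect_le continuous_intros)
  moreover have "?G = (\<Inter>x\<in>convex hull C. {z. 0 \<le> (x - fst z) \<bullet> snd z})"
    by auto
  ultimately have "closed ?G"
    by auto
  have graph: "(\<lambda>x. (x, inner_normal C x)) ` C = (C \<times> sphere 0 1) \<inter> ?G"
  proof
    show "(\<lambda>x. (x, inner_normal C x)) ` C \<subseteq> (C \<times> sphere 0 1) \<inter> ?G"
      using norm_inner_normal inner_normal_supporting by auto
    show "(C \<times> sphere 0 1) \<inter> ?G \<subseteq> (\<lambda>x. (x, inner_normal C x)) ` C"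
    proof
      fix z assume z: "z \<in> (C \<times> sphere 0 1) \<inter> ?G"
      then have "fst z \<in> C" "is_inner_normal C (fst z) (snd z)"
        by (auto simp: is_inner_normal_def)
      then have "z = (fst z, inner_normal C (fst z))"
        using inner_normal_unique by simp
      then show "z \<in> (\<lambda>x. (x, inner_normal C x)) ` C"
        using \<open>fst z \<in> C\<close> by (rule image_eqI)
    qed
  qed
  show ?thesis
  proof (subst continuous_closed_graph_eq[where T = "sphere 0 1"])
    show "inner_normal C \<in> C \<rightarrow> sphere 0 1"
      using norm_inner_normal by auto
    show "closedin (top_of_set (C \<times> sphere 0 1)) ((\<lambda>x. (x, inner_normal C x)) ` C)"
      unfolding graph using \<open>closed ?G\<close> by (simp add: closedin_closed_Int)
  qed simp
qed

lemma curve_derivative_orthogonal_inner_normal: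
  assumes \<gamma>: "\<gamma> ` S \<subseteq> C" "t \<in> S" and nontriv: "at t within S \<noteq> bot"
    and D: "(\<gamma> has_vector_derivative D) (at t within S)"
  shows "D \<bullet> inner_normal C (\<gamma> t) = 0"
proof (rule has_vector_derivative_orthogonal_support[OF D _ nontriv])
  have "(\<gamma> \<longlongrightarrow> \<gamma> t) (at t within S)"
    using has_vector_derivative_continuous[OF D] by (simp add: continuous_within)
  then show "((\<lambda>s. inner_normal C (\<gamma> s)) \<longlongrightarrow> inner_normal C (\<gamma> t)) (at t within S)"
    using \<gamma> by (intro continuous_on_tendsto_compose[OF continuous_on_inner_normal])
      (auto simp: eventually_at_filter intro!: always_eventually)
  show "\<forall>s\<in>S. 0 \<le> (\<gamma> s - \<gamma> t) \<bullet> inner_normal C (\<gamma> t) \<and> 0 \<le> (\<gamma> t - \<gamma> s) \<bullet> inner_normal C (\<gamma> s)"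
    using \<gamma> inner_normal_supporting_curve by (auto simp: image_subset_iff)
qed

lemma curve_derivative_inner_normal_derivative_nonpos:
  assumes \<gamma>: "\<gamma> ` S \<subseteq> C" "t \<in> S" and nontriv: "at t within S \<noteq> bot"
    and D: "(\<gamma> has_vector_derivative D) (at t within S)"
    and E: "((\<lambda>s. inner_normal C (\<gamma> s)) has_vector_derivative E) (at t within S)"
  shows "D \<bullet> E \<le> 0"
proof (rule has_vector_derivative_inner_nonpos[OF D E nontriv], intro ballI)
  fix s assume "s \<in> S"
  then have "0 \<le> (\<gamma> s - \<gamma> t) \<bullet> inner_normal C (\<gamma> t)" "0 \<le> (\<gamma> t - \<gamma> s) \<bullet> inner_normal C (\<gamma> s)"
    using \<gamma> inner_normal_supporting_curve by (auto simp: image_subset_iff)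
  then show "(\<gamma> s - \<gamma> t) \<bullet> (inner_normal C (\<gamma> s) - inner_normal C (\<gamma> t)) \<le> 0"
    unfolding inner_diff_left inner_diff_right by linarith
qed

lemma normal_ray_meets_interior:
  assumes p: "p \<in> C"
  shows "\<exists>r>0. p + r *\<^sub>R inner_normal C p \<in> interior (convex hull C)"
proof (rule ccontr)
  define u where "u = inner_normal C p"
  assume no_ray: "\<not> (\<exists>r>0. p + r *\<^sub>R inner_normal C p \<in> interior (convex hull C))"
  have uu: "u \<bullet> u = 1"
    unfolding u_def using p by (rule inner_normal_inner_self)
  have "(x - p) \<bullet> rot90 u \<noteq> 0" if x: "x \<in> interior (convex hull C)" for x
  proof
    assume "(x - p) \<bullet> rot90 u = 0"
    then have "x = p + ((x - p) \<bullet> u) *\<^sub>R u"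
      using orthogonal_rot90_eq[OF uu] by (metis add.commute diff_add_cancel)
    moreover have "0 < (x - p) \<bullet> u"
      unfolding u_def using is_inner_normal_inner_normal[OF p] x by (rule is_inner_normal_interior_pos)
    ultimately show False
      using no_ray x unfolding u_def by metis
  qed
  then obtain w where w: "w = rot90 u \<or> w = - rot90 u" "\<And>x. x \<in> convex hull C \<Longrightarrow> 0 \<le> (x - p) \<bullet> w"
    using convex_body_side_of_hyperplane[OF convex_convex_hull
        compact_imp_closed[OF smooth_convex_curve_compact_hull] smooth_convex_curve_interior_hull]
    by blast
  moreover have "norm w = 1"
    using w(1) uu by (auto simp: norm_eq_1)
  ultimately have "is_inner_normal C p w"
    by (simp add: is_inner_normal_def)
  then have "u = w"
    unfolding u_def using p inner_normal_unique by blast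
  moreover have "u \<bullet> w = 0"
    using w(1) by auto
  ultimately show False
    using uu by simp
qed

lemma normal_chord:
  assumes p: "p \<in> C"
  obtains l where "0 < l" "hmap C p = p + l *\<^sub>R inner_normal C p"
    "\<forall>r. p + r *\<^sub>R inner_normal C p \<in> C \<longleftrightarrow> r = 0 \<or> r = l"
    "\<forall>r>0. p + r *\<^sub>R inner_normal C p \<in> convex hull C \<longleftrightarrow> r \<le> l"
proof -
  define u where "u = inner_normal C p"
  let ?H = "convex hull C"
  have "u \<noteq> 0"
    unfolding u_def using inner_normal_inner_self[OF p] by auto
  have H: "convex ?H" "closed ?H"
    using compact_imp_closed[OF smooth_convex_curve_compact_hull] by auto
  have "p \<in> ?H"
    using p hull_subset[of C convex] by blast
  then obtain l where l: "p + l *\<^sub>R u \<in> ?H" and l_max: "\<And>r. p + r *\<^sub>R u \<in> ?H \<Longrightarrow> r \<le> l"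
    using compact_attains_sup[OF compact_line_preimage[OF smooth_convex_curve_compact_hull \<open>u \<noteq> 0\<close>, of p]]
    by (metis (no_types, lifting) empty_iff mem_Collect_eq scale_zero_left add_0_right)
  obtain r0 where r0: "0 < r0" "p + r0 *\<^sub>R u \<in> interior ?H"
    using normal_ray_meets_interior[OF p] unfolding u_def by blast
  then have "0 < l"
    using l_max interior_subset by force
  have inside: "p + r *\<^sub>R u \<in> interior ?H" if "0 < r" "r < l" for r
    using in_interior_convex_line[OF H \<open>u \<noteq> 0\<close> \<open>p \<in> ?H\<close> l r0(2) that] .
  have "p + l *\<^sub>R u \<in> C"
    using l line_max_not_interior[OF \<open>u \<noteq> 0\<close> l_max] H(2) smooth_convex_curve_frontier_hull
    by (auto simp: frontier_def)
  have chord: "p + r *\<^sub>R u \<in> C \<longleftrightarrow> r = 0 \<or> r = l" for r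
  proof
    assume r: "p + r *\<^sub>R u \<in> C"
    then have "p + r *\<^sub>R u \<in> ?H" "p + r *\<^sub>R u \<notin> interior ?H"
      using hull_subset[of C convex] smooth_convex_curve_frontier_hull by (auto simp: frontier_def)
    moreover have "0 \<le> r"
      using inner_normal_supporting_curve[OF p r] inner_normal_inner_self[OF p] by (simp add: u_def)
    ultimately show "r = 0 \<or> r = l"
      using inside[of r] l_max[of r] by force
  qed (use p \<open>p + l *\<^sub>R u \<in> C\<close> in auto)
  moreover have "p + r *\<^sub>R u \<in> ?H \<longleftrightarrow> r \<le> l" if "0 < r" for r
    using that l inside[of r] interior_subset[of ?H] l_max[of r] by (cases "r = l") auto
  ultimately show ?thesis
    using that \<open>0 < l\<close> hmap_eqI[of C p l] \<open>u \<noteq> 0\<close> unfolding u_def by auto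
qed

lemma
  assumes "p \<in> C"
  shows hmap_in_curve: "hmap C p \<in> C"
    and hmap_on_normal_line: "hmap C p = p + ((hmap C p - p) \<bullet> inner_normal C p) *\<^sub>R inner_normal C p"
proof -
  obtain l where "0 < l" "hmap C p = p + l *\<^sub>R inner_normal C p"
    "\<forall>r. p + r *\<^sub>R inner_normal C p \<in> C \<longleftrightarrow> r = 0 \<or> r = l"
    "\<forall>r>0. p + r *\<^sub>R inner_normal C p \<in> convex hull C \<longleftrightarrow> r \<le> l"
    by (rule normal_chord[OF assms])
  then show "hmap C p \<in> C" "hmap C p = p + ((hmap C p - p) \<bullet> inner_normal C p) *\<^sub>R inner_normal C p"
    using inner_normal_inner_self[OF assms] by simp_all
qed

lemma inner_normal_hmap_neg:
  assumes p: "p \<in> C"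
  shows "inner_normal C (hmap C p) \<bullet> inner_normal C p < 0"
proof -
  define u where "u = inner_normal C p"
  define w where "w = inner_normal C (hmap C p)"
  obtain l where "0 < l" and q: "hmap C p = p + l *\<^sub>R inner_normal C p"
    and "\<forall>r. p + r *\<^sub>R inner_normal C p \<in> C \<longleftrightarrow> r = 0 \<or> r = l"
    and "\<forall>r>0. p + r *\<^sub>R inner_normal C p \<in> convex hull C \<longleftrightarrow> r \<le> l"
    by (rule normal_chord[OF p])
  then have "hmap C p \<in> C"
    by simp
  have shift: "(x - p) \<bullet> w = (x - hmap C p) \<bullet> w + l * (w \<bullet> u)" for x
    unfolding q u_def[symmetric] by (simp add: inner_diff_left inner_add_left inner_commute[of u])
  have "0 \<le> (p - hmap C p) \<bullet> w"
    unfolding w_def using \<open>hmap C p \<in> C\<close> p by (rule inner_normal_supporting_curve)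
  then have "l * (w \<bullet> u) \<le> 0"
    using shift[of p] by simp
  then have "w \<bullet> u \<le> 0"
    using \<open>0 < l\<close> by (simp add: mult_le_0_iff)
  moreover have "w \<bullet> u \<noteq> 0"
  proof
    assume "w \<bullet> u = 0"
    then have "0 \<le> (x - p) \<bullet> w" if "x \<in> convex hull C" for x
      using inner_normal_supporting[OF \<open>hmap C p \<in> C\<close> that] shift[of x] by (simp add: w_def)
    then have "is_inner_normal C p w"
      using norm_inner_normal[OF \<open>hmap C p \<in> C\<close>] by (simp add: is_inner_normal_def w_def)
    then have "u = w"
      unfolding u_def using p inner_normal_unique by blast
    then show False
      using \<open>w \<bullet> u = 0\<close> inner_normal_inner_self[OF p] by (simp add: u_def)
  qed
  ultimately show ?thesis
    by (simp add: u_def w_def)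
qed

end

section \<open>A counterclockwise motion along a smooth convex curve\<close>

locale ccw_convex_motion =
  fixes C :: "(real^2) set" and \<alpha> :: "real \<Rightarrow> real^2"
  assumes smooth: "smooth_convex_curve C"
    and on_curve: "\<forall>s\<in>Iv. \<alpha> s \<in> C"
    and regular: "\<forall>s\<in>Iv. \<alpha> differentiable (at s within Iv) \<and> dcurve \<alpha> s \<noteq> 0"
    and tangent_regular: "\<forall>s\<in>Iv. unit_tangent \<alpha> differentiable (at s within Iv)
                                \<and> dcurve (unit_tangent \<alpha>) s \<noteq> 0"
    and ccw: "counterclockwise C \<alpha>"
begin

abbreviation normal :: "real \<Rightarrow> real^2" where
  "normal s \<equiv> inner_normal C (\<alpha> s)"

lemma has_vector_derivative_curve:
  "s \<in> Iv \<Longrightarrow> (\<alpha> has_vector_derivative dcurve \<alpha> s) (at s within Iv)"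
  using regular by (simp add: dcurve_def vector_derivative_works)

lemma has_vector_derivative_unit_tangent:
  "s \<in> Iv \<Longrightarrow> (unit_tangent \<alpha> has_vector_derivative dcurve (unit_tangent \<alpha>) s) (at s within Iv)"
  using tangent_regular by (simp add: dcurve_def vector_derivative_works)

lemma normal_inner_self: "s \<in> Iv \<Longrightarrow> normal s \<bullet> normal s = 1"
  using on_curve inner_normal_inner_self[OF smooth] by blast

lemma dcurve_orthogonal_normal: "s \<in> Iv \<Longrightarrow> dcurve \<alpha> s \<bullet> normal s = 0"
  using on_curve at_within_Iv_nontrivial has_vector_derivative_curve
  by (intro curve_derivative_orthogonal_inner_normal[OF smooth]) auto

lemma det2_dcurve_normal_pos: "s \<in> Iv \<Longrightarrow> 0 < det2 (dcurve \<alpha> s) (normal s)"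
proof -
  assume s: "s \<in> Iv"
  define d where "d = det2 (dcurve \<alpha> s) (normal s)"
  obtain c where c: "c \<in> interior (convex hull C)"
    using smooth_convex_curve_interior_hull[OF smooth] by blast
  have "dcurve \<alpha> s = (- d) *\<^sub>R rot90 (normal s)"
    unfolding d_def using s by (intro orthogonal_unit_eq_rot90 normal_inner_self dcurve_orthogonal_normal)
  then have "det2 (dcurve \<alpha> s) (c - \<alpha> s) = d * ((c - \<alpha> s) \<bullet> normal s)"
    by (simp add: inner_commute)
  moreover have "0 < det2 (dcurve \<alpha> s) (c - \<alpha> s)"
    using ccw c s by (simp add: counterclockwise_def)
  moreover have "0 < (c - \<alpha> s) \<bullet> normal s"
    using s on_curve is_inner_normal_interior_pos[OF is_inner_normal_inner_normal[OF smooth] c] by blast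
  ultimately show ?thesis
    unfolding d_def by (simp add: zero_less_mult_iff)
qed

lemma dcurve_eq_rot90_normal:
  "s \<in> Iv \<Longrightarrow> dcurve \<alpha> s = (- det2 (dcurve \<alpha> s) (normal s)) *\<^sub>R rot90 (normal s)"
  by (intro orthogonal_unit_eq_rot90 normal_inner_self dcurve_orthogonal_normal)

lemma norm_dcurve_eq_det2: "s \<in> Iv \<Longrightarrow> norm (dcurve \<alpha> s) = det2 (dcurve \<alpha> s) (normal s)"
proof -
  assume s: "s \<in> Iv"
  define d where "d = det2 (dcurve \<alpha> s) (normal s)"
  have "dcurve \<alpha> s = (- d) *\<^sub>R rot90 (normal s)"
    unfolding d_def using s by (rule dcurve_eq_rot90_normal)
  moreover have "norm (normal s) = 1" "0 < d"
    using s on_curve norm_inner_normal[OF smooth] det2_dcurve_normal_pos unfolding d_def by auto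
  ultimately show ?thesis
    unfolding d_def[symmetric] by simp
qed

lemma unit_tangent_eq: "s \<in> Iv \<Longrightarrow> unit_tangent \<alpha> s = - rot90 (normal s)"
proof -
  assume s: "s \<in> Iv"
  define d where "d = det2 (dcurve \<alpha> s) (normal s)"
  have "dcurve \<alpha> s = (- d) *\<^sub>R rot90 (normal s)"
    unfolding d_def using s by (rule dcurve_eq_rot90_normal)
  moreover have "norm (dcurve \<alpha> s) = d" "0 < d"
    using s norm_dcurve_eq_det2 det2_dcurve_normal_pos unfolding d_def by auto
  ultimately show ?thesis
    unfolding unit_tangent_def by simp
qed

lemma normal_eq_rot90_unit_tangent: "s \<in> Iv \<Longrightarrow> normal s = rot90 (unit_tangent \<alpha> s)"
  using unit_tangent_eq by simp

lemma dcurve_eq_scaleR_unit_tangent: "s \<in> Iv \<Longrightarrow> dcurve \<alpha> s = norm (dcurve \<alpha> s) *\<^sub>R unit_tangent \<alpha> s"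
  using regular by (simp add: unit_tangent_def)

lemma has_vector_derivative_normal:
  assumes s: "s \<in> Iv"
  shows "(normal has_vector_derivative rot90 (dcurve (unit_tangent \<alpha>) s)) (at s within Iv)"
proof (rule has_vector_derivative_transform_within[OF _ zero_less_one s])
  show "((\<lambda>s. rot90 (unit_tangent \<alpha> s)) has_vector_derivative rot90 (dcurve (unit_tangent \<alpha>) s))
      (at s within Iv)"
    using bounded_linear_rot90 has_vector_derivative_unit_tangent[OF s]
    by (rule bounded_linear.has_vector_derivative)
  show "rot90 (unit_tangent \<alpha> s') = normal s'" if "s' \<in> Iv" for s'
    using normal_eq_rot90_unit_tangent[OF that] by simp
qed

lemma dcurve_unit_tangent_eq:
  assumes s: "s \<in> Iv"
  shows "dcurve (unit_tangent \<alpha>) s = norm (dcurve (unit_tangent \<alpha>) s) *\<^sub>R normal s"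
proof -
  \<comment> \<open>\<open>T' \<bottom> T\<close> makes \<open>T'\<close> parallel to \<open>N\<close>; the sign of \<open>T' \<bullet> N\<close> comes from the monotonicity of the
    inner normal along \<open>C\<close>.\<close>
  define T' where "T' = dcurve (unit_tangent \<alpha>) s"
  define N where "N = normal s"
  have NN: "N \<bullet> N = 1"
    unfolding N_def using s by (rule normal_inner_self)
  have "\<forall>s\<in>Iv. unit_tangent \<alpha> s \<bullet> unit_tangent \<alpha> s = 1"
    using unit_tangent_eq normal_inner_self by simp
  then have "T' \<bullet> unit_tangent \<alpha> s = 0"
    unfolding T'_def using s has_vector_derivative_unit_tangent[OF s] at_within_Iv_nontrivial[OF s]
    by (intro has_vector_derivative_unit_orthogonal)
  then have T': "T' = (T' \<bullet> N) *\<^sub>R N"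
    using s NN by (intro orthogonal_rot90_eq) (simp_all add: unit_tangent_eq N_def)
  have "\<alpha> ` Iv \<subseteq> C"
    using on_curve by auto
  then have "dcurve \<alpha> s \<bullet> rot90 T' \<le> 0"
    unfolding T'_def using curve_derivative_inner_normal_derivative_nonpos[OF smooth _ s
        at_within_Iv_nontrivial[OF s] has_vector_derivative_curve[OF s] has_vector_derivative_normal[OF s]]
    by blast
  moreover have "dcurve \<alpha> s \<bullet> rot90 T' = - norm (dcurve \<alpha> s) * (T' \<bullet> N)"
  proof -
    define m where "m = norm (dcurve \<alpha> s)"
    have "dcurve \<alpha> s = - m *\<^sub>R rot90 N"
      using dcurve_eq_scaleR_unit_tangent[OF s] unit_tangent_eq[OF s] by (simp add: N_def m_def)
    then show ?thesis
      unfolding m_def[symmetric] by (simp add: inner_commute)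
  qed
  moreover have "0 < norm (dcurve \<alpha> s)"
    using regular s by simp
  ultimately have "0 \<le> T' \<bullet> N"
    by (simp add: zero_le_mult_iff)
  moreover have "norm N = 1"
    using NN by (simp add: norm_eq_1)
  then have "norm T' = \<bar>T' \<bullet> N\<bar>"
    using arg_cong[OF T', of norm] by simp
  ultimately have "norm T' = T' \<bullet> N"
    by simp
  then show ?thesis
    using T' unfolding T'_def[symmetric] N_def[symmetric] by metis
qed

lemma curve_normal_eq: "s \<in> Iv \<Longrightarrow> curve_normal \<alpha> s = normal s"
proof -
  assume s: "s \<in> Iv"
  define c where "c = norm (dcurve (unit_tangent \<alpha>) s)"
  have "dcurve (unit_tangent \<alpha>) s = c *\<^sub>R normal s" "c \<noteq> 0"
    unfolding c_def using dcurve_unit_tangent_eq[OF s] tangent_regular s by auto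
  then show ?thesis
    unfolding curve_normal_def c_def[symmetric] by simp
qed

lemma curvature_pos: "s \<in> Iv \<Longrightarrow> 0 < curvature \<alpha> s"
  using regular tangent_regular by (simp add: curvature_def)

lemma center_curv_eq: "s \<in> Iv \<Longrightarrow> center_curv \<alpha> s = \<alpha> s + (1 / curvature \<alpha> s) *\<^sub>R normal s"
  by (simp add: center_curv_def curve_normal_eq)

lemma line_through_center_curv:
  assumes t: "t \<in> Iv"
  shows "line_through (\<alpha> t) (center_curv \<alpha> t) = {\<alpha> t + r *\<^sub>R normal t | r. True}"
proof -
  have "1 / curvature \<alpha> t \<noteq> 0"
    using curvature_pos[OF t] by simp
  then show ?thesis
    unfolding center_curv_eq[OF t] by (rule line_through_scaleR)
qed

lemma center_curv_mem_hull_iff: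
  assumes t: "t \<in> Iv" and l: "\<forall>r>0. \<alpha> t + r *\<^sub>R normal t \<in> convex hull C \<longleftrightarrow> r \<le> l"
  shows "center_curv \<alpha> t \<in> convex hull C
    \<longleftrightarrow> norm (dcurve \<alpha> t) \<le> l * norm (dcurve (unit_tangent \<alpha>) t)"
proof -
  have "0 < norm (dcurve \<alpha> t)" "0 < norm (dcurve (unit_tangent \<alpha>) t)"
    using regular tangent_regular t by auto
  then have "1 / curvature \<alpha> t = norm (dcurve \<alpha> t) / norm (dcurve (unit_tangent \<alpha>) t)"
    "0 < 1 / curvature \<alpha> t"
    by (simp_all add: curvature_def)
  then show ?thesis
    using center_curv_eq[OF t] l \<open>0 < norm (dcurve (unit_tangent \<alpha>) t)\<close>
    by (simp add: divide_le_eq mult.commute)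
qed

lemma matching_orient_iff:
  assumes t: "t \<in> Iv"
  shows "matching_orient C \<alpha> \<beta> t \<longleftrightarrow> 0 < det2 (dcurve \<beta> t) (inner_normal C (\<beta> t))"
proof -
  have "0 < det2 (dcurve \<alpha> t) (curve_normal \<alpha> t)"
    using det2_dcurve_normal_pos[OF t] curve_normal_eq[OF t] by simp
  then show ?thesis
    by (simp add: matching_orient_def sgn_if)
qed

context
  fixes \<beta> :: "real \<Rightarrow> real^2" and t :: real
  assumes hmap: "\<forall>s\<in>Iv. \<beta> s = hmap C (\<alpha> s)" and t: "t \<in> Iv"
    and \<beta>_diff: "\<beta> differentiable (at t within Iv)"
begin

lemma has_vector_derivative_hmap_curve: "(\<beta> has_vector_derivative dcurve \<beta> t) (at t within Iv)"
  using \<beta>_diff by (simp add: dcurve_def vector_derivative_works)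

lemma det2_dcurve_hmap_sign:
  assumes "det2 (dcurve \<beta> t) (inner_normal C (\<beta> t)) \<noteq> 0"
  shows "det2 (dcurve \<beta> t) (inner_normal C (\<beta> t)) * det2 (dcurve \<beta> t) (normal t) < 0"
proof (rule det2_sign_orthogonal)
  show "dcurve \<beta> t \<noteq> 0"
    using assms by (auto simp: det2_def)
  have "\<beta> ` Iv \<subseteq> C"
    using hmap on_curve hmap_in_curve[OF smooth] by auto
  then show "dcurve \<beta> t \<bullet> inner_normal C (\<beta> t) = 0"
    using curve_derivative_orthogonal_inner_normal[OF smooth _ t at_within_Iv_nontrivial[OF t]
        has_vector_derivative_hmap_curve] by blast
  show "inner_normal C (\<beta> t) \<bullet> normal t < 0"
    using hmap on_curve t inner_normal_hmap_neg[OF smooth] by auto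
qed

lemma det2_dcurve_hmap_normal:
  assumes l: "\<beta> t = \<alpha> t + l *\<^sub>R normal t"
  shows "det2 (dcurve \<beta> t) (normal t)
    = norm (dcurve \<alpha> t) - l * norm (dcurve (unit_tangent \<alpha>) t)"
proof -
  define \<mu> where "\<mu> s = (\<beta> s - \<alpha> s) \<bullet> normal s" for s
  have \<beta>_eq: "\<forall>s\<in>Iv. \<beta> s = \<alpha> s + \<mu> s *\<^sub>R normal s"
    using hmap on_curve hmap_on_normal_line[OF smooth] by (simp add: \<mu>_def)
  have "((\<lambda>s. (\<beta> s - \<alpha> s) \<bullet> normal s) \<longlongrightarrow> (\<beta> t - \<alpha> t) \<bullet> normal t) (at t within Iv)"
    using has_vector_derivative_continuous[OF has_vector_derivative_hmap_curve]
      has_vector_derivative_continuous[OF has_vector_derivative_curve[OF t]]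
      has_vector_derivative_continuous[OF has_vector_derivative_normal[OF t]]
    by (intro tendsto_intros) (simp_all add: continuous_within)
  then have "det2 (dcurve \<beta> t) (normal t)
      = det2 (dcurve \<alpha> t) (normal t) + \<mu> t * det2 (rot90 (dcurve (unit_tangent \<alpha>) t)) (normal t)"
    unfolding \<mu>_def[symmetric]
    by (intro det2_derivative_along_normal[OF \<beta>_eq t at_within_Iv_nontrivial[OF t]
          has_vector_derivative_curve[OF t] has_vector_derivative_normal[OF t] has_vector_derivative_hmap_curve])
  moreover have "\<mu> t = l"
    using l normal_inner_self[OF t] by (simp add: \<mu>_def)
  moreover have "det2 (rot90 (dcurve (unit_tangent \<alpha>) t)) (normal t) = - norm (dcurve (unit_tangent \<alpha>) t)"
  proof -
    define k where "k = norm (dcurve (unit_tangent \<alpha>) t)"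
    have "dcurve (unit_tangent \<alpha>) t = k *\<^sub>R normal t"
      unfolding k_def by (rule dcurve_unit_tangent_eq[OF t])
    then show ?thesis
      unfolding k_def[symmetric] using normal_inner_self[OF t] by simp
  qed
  ultimately show ?thesis
    using norm_dcurve_eq_det2[OF t] by simp
qed

end

end

theorem lemmaD4:
  fixes C :: "(real^2) set" and \<alpha> \<beta> :: "real \<Rightarrow> real^2" and t :: real
  assumes C: "smooth_convex_curve C"
    and \<alpha>C: "\<forall>s\<in>Iv. \<alpha> s \<in> C"
    and \<alpha>diff: "\<forall>s\<in>Iv. \<alpha> differentiable (at s within Iv) \<and> dcurve \<alpha> s \<noteq> 0"
    and Tdiff: "\<forall>s\<in>Iv. unit_tangent \<alpha> differentiable (at s within Iv)
                         \<and> dcurve (unit_tangent \<alpha>) s \<noteq> 0"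
    and ccw: "counterclockwise C \<alpha>"
    and \<beta>def: "\<forall>s\<in>Iv. \<beta> s = hmap C (\<alpha> s)"
    and t: "t \<in> Iv"
    and \<beta>diff: "\<beta> differentiable (at t within Iv)"
    and basis: "det2 (dcurve \<beta> t) (inner_normal C (\<beta> t)) \<noteq> 0"
  shows "(\<exists>!q. q \<in> C - {\<alpha> t} \<and> q \<in> line_through (\<alpha> t) (center_curv \<alpha> t))
         \<and> \<beta> t \<in> C - {\<alpha> t} \<and> \<beta> t \<in> line_through (\<alpha> t) (center_curv \<alpha> t)
         \<and> (matching_orient C \<alpha> \<beta> t \<longleftrightarrow> center_curv \<alpha> t \<in> convex hull C)"
proof -
  interpret ccw_convex_motion C \<alpha>
    using assms by unfold_locales
  have "\<alpha> t \<in> C"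
    using \<alpha>C t by blast
  then obtain l where l: "0 < l" "hmap C (\<alpha> t) = \<alpha> t + l *\<^sub>R normal t"
    "\<forall>r. \<alpha> t + r *\<^sub>R normal t \<in> C \<longleftrightarrow> r = 0 \<or> r = l"
    "\<forall>r>0. \<alpha> t + r *\<^sub>R normal t \<in> convex hull C \<longleftrightarrow> r \<le> l"
    by (rule normal_chord[OF C])
  have \<beta>t: "\<beta> t = \<alpha> t + l *\<^sub>R normal t"
    using l(2) \<beta>def t by simp
  have "normal t \<noteq> 0"
    using normal_inner_self[OF t] by auto
  then have chord: "\<exists>!q. q \<in> C - {\<alpha> t} \<and> q \<in> line_through (\<alpha> t) (center_curv \<alpha> t)"
    and \<beta>_chord: "\<beta> t \<in> C - {\<alpha> t}" "\<beta> t \<in> line_through (\<alpha> t) (center_curv \<alpha> t)"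
    unfolding line_through_center_curv[OF t] \<beta>t using l(1,3)
    by (auto intro!: ex1I[of _ "\<alpha> t + l *\<^sub>R normal t"])
  have "matching_orient C \<alpha> \<beta> t \<longleftrightarrow> 0 < det2 (dcurve \<beta> t) (inner_normal C (\<beta> t))"
    by (rule matching_orient_iff[OF t])
  also have "\<dots> \<longleftrightarrow> det2 (dcurve \<beta> t) (normal t) \<le> 0"
    using det2_dcurve_hmap_sign[OF \<beta>def t \<beta>diff basis] unfolding mult_less_0_iff by linarith
  also have "\<dots> \<longleftrightarrow> norm (dcurve \<alpha> t) \<le> l * norm (dcurve (unit_tangent \<alpha>) t)"
    using det2_dcurve_hmap_normal[OF \<beta>def t \<beta>diff \<beta>t] by simp
  also have "\<dots> \<longleftrightarrow> center_curv \<alpha> t \<in> convex hull C"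
    using center_curv_mem_hull_iff[OF t l(4)] by simp
  finally show ?thesis
    by (intro conjI chord \<beta>_chord)
qed

end
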